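(* Let $d \geq 1$ and let $(x_n)_{n=1}^{\infty}$ be a sequence in $\mathbb{T}^d$. Suppose that for all $s > 0$, $$ \lim_{N \rightarrow \infty}{ \frac{1}{N} \# \left\{ 1 \leq m \neq n \leq N: \|x_m - x_n\|_{2} \leq \frac{s}{N^{1/d}} \right\}} = \omega_d s^d.$$ Then $(x_n)$ is uniformly distributed in $\mathbb{T}^d$.
   Context: $\mathbb{T}^d = \mathbb{R}^d/\mathbb{Z}^d$ is the $d$-dimensional torus, normalized to have volume 1. $\|x_m - x_n\|_2$ denotes the Euclidean distance on the torus, i.e. the minimum of $\|y\|_2$ over all representatives $y \in \mathbb{R}^d$ of $x_m - x_n$. $\omega_d$ denotes the volume of the Euclidean unit ball in $\mathbb{R}^d$. A sequence is uniformly distributed if the proportion of its first $N$ terms lying in any box tends to the volume of the box as $N \to \infty$. *)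

theory Defs
  imports "HOL-Analysis.Analysis"
begin

text \<open>Points of the torus R^d/Z^d are represented by arbitrary vectors in R^d;
  the torus distance is the minimal Euclidean norm over all representatives of the difference.\<close>
definition torus_dist :: "real^'d \<Rightarrow> real^'d \<Rightarrow> real" where
  "torus_dist x y = Inf {norm (x - y - (\<chi> i. real_of_int (k $ i))) | k :: int^'d. True}"

definition torus_frac :: "real^'d \<Rightarrow> real^'d" where
  "torus_frac x = (\<chi> i. frac (x $ i))"

definition torus_unif_distr :: "(nat \<Rightarrow> real^'d) \<Rightarrow> bool" where
  "torus_unif_distr x \<longleftrightarrow>
     (\<forall>a b :: real^'d. (\<forall>i. 0 \<le> a $ i \<and> a $ i \<le> b $ i \<and> b $ i \<le> 1) \<longrightarrow>
        (\<lambda>N. real (card {n \<in> {1..N}. \<forall>i. a $ i \<le> torus_frac (x n) $ i \<and> torus_frac (x n) $ i < b $ i}) / real N)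
          \<longlonglongrightarrow> (\<Prod>i\<in>UNIV. b $ i - a $ i))"

definition unit_ball_vol :: "'d::finite itself \<Rightarrow> real" where
  "unit_ball_vol _ = measure lborel (ball (0 :: real^'d) 1)"

end

theory Submission
  imports Defs "HOL-Real_Asymp.Real_Asymp"
begin

text \<open>Put a ball of radius r = c / root d N around the representative p_n in [0,1)^d of each of the
  first N points, let \<kappa> = N \<omega>_d r^d be their total volume, and let F = \<Sum>_n 1_B(p_n,r) - \<kappa> 1_W
  on a cube W containing all the balls. For a box G, the mass \<Sum>_n |B(p_n,r) \<inter> G| lies between
  \<omega>_d r^d times the numbers of points in the boxes obtained by shrinking and enlarging G by r, and
  it differs from \<kappa> |G| by at most (|W| \<integral> F^2)^(1/2), by Cauchy-Schwarz in the form
  2 \<tau> |F| \<le> F^2 + \<tau>^2 on W.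

  The only term of \<integral> F^2 that is not explicit is the pair sum \<Sum>_(m \<noteq> n) |B(p_m,r) \<inter> B(p_n,r)|.
  The volume of the intersection of two balls decreases with the distance of their centres and
  vanishes beyond 2r, so Abel summation over M shells of equal volume bounds the pair sum by the
  pair counts at M scales. The hypothesis controls these counts, because the distance on the torus
  never exceeds the Euclidean distance of the representatives. As the intersection volume
  integrates to (\<omega>_d r^d)^2, this gives \<integral> F^2 \<le> 2 \<kappa> + \<kappa>^2 (2^d / M + |W| - 1), which is small
  compared with \<kappa>^2 once c and M are large and N tends to infinity.\<close>

section \<open>Volumes of balls and of their intersections\<close>

lemma unit_ball_vol_eq_Ball_Volume:
  "unit_ball_vol TYPE('n::finite) = Ball_Volume.unit_ball_vol (real CARD('n))"
  using content_ball[of 1 "0::real^'n"] by (simp add: unit_ball_vol_def)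

lemma unit_ball_vol_pos: "unit_ball_vol TYPE('n::finite) > 0"
  by (simp add: unit_ball_vol_eq_Ball_Volume)

lemma measure_ball_eq:
  "r \<ge> 0 \<Longrightarrow> measure lborel (ball (c::real^'n) r) = unit_ball_vol TYPE('n) * r ^ CARD('n)"
  using content_ball[of r c] by (simp add: unit_ball_vol_eq_Ball_Volume)

lemma measure_cball_eq:
  "r \<ge> 0 \<Longrightarrow> measure lborel (cball (c::real^'n) r) = unit_ball_vol TYPE('n) * r ^ CARD('n)"
  using content_cball[of r c] by (simp add: unit_ball_vol_eq_Ball_Volume)

lemma emeasure_ball_eq:
  "r \<ge> 0 \<Longrightarrow> emeasure lborel (ball (c::real^'n) r) = ennreal (unit_ball_vol TYPE('n) * r ^ CARD('n))"
  using emeasure_lborel_ball_finite[of c r] measure_ball_eq[of r c]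
  by (simp add: emeasure_eq_ennreal_measure)

text \<open>\<open>measure_orthogonal_image\<close> requires an index type of class \<open>wellorder\<close>. Here a Vitali
  covering reduces the claim to balls, whose images under \<open>T\<close> are balls of the same radius.\<close>
lemma emeasure_orthogonal_image_open:
  fixes T :: "'a::euclidean_space \<Rightarrow> 'a"
  assumes T: "orthogonal_transformation T" and "open U"
  shows "emeasure lebesgue (T ` U) = emeasure lebesgue U"
proof -
  let ?K = "{(x, \<rho>). \<rho> > 0 \<and> ball x \<rho> \<subseteq> U}"
  let ?B = "\<lambda>i. ball (fst i) (snd i)" and ?TB = "\<lambda>i. ball (T (fst i)) (snd i)"
  obtain C where C: "countable C" "C \<subseteq> ?K" and pw: "pairwise (\<lambda>i j. disjnt (?B i) (?B j)) C"
    and null: "negligible (U - (\<Union>i\<in>C. ?B i))"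
  proof (rule Vitali_covering_theorem_balls [of U ?K fst snd])
    fix x and d :: real
    assume "x \<in> U" "0 < d"
    then obtain k where "k > 0" "ball x k \<subseteq> U"
      using \<open>open U\<close> openE by blast
    with \<open>0 < d\<close> show "\<exists>i. i \<in> ?K \<and> x \<in> ?B i \<and> snd i < d"
      by (intro exI[of _ "(x, min k (d/2))"]) auto
  qed auto
  define V where "V = (\<Union>i\<in>C. ?B i)"
  have VU: "V \<subseteq> U" using C by (force simp: V_def)
  have TV: "T ` V = (\<Union>i\<in>C. ?TB i)"
    unfolding V_def image_UN using T image_orthogonal_transformation_ball by metis
  have disj: "disjoint_family_on ?B C"
    using pw unfolding disjoint_family_on_def pairwise_def disjnt_def by blast
  then have disjT: "disjoint_family_on ?TB C"
    unfolding disjoint_family_on_def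
    by (metis T image_Int image_empty image_orthogonal_transformation_ball orthogonal_transformation_inj)
  have ball_eq: "emeasure lebesgue (ball y \<rho>) = emeasure lebesgue (ball x \<rho>)" for x y :: 'a and \<rho>
    by (cases "\<rho> \<ge> 0") (simp_all add: emeasure_ball ball_empty)
  have "emeasure lebesgue (T ` V) = (\<integral>\<^sup>+i. emeasure lebesgue (?TB i) \<partial>count_space C)"
    unfolding TV using C disjT by (intro emeasure_UN_countable) auto
  also have "\<dots> = (\<integral>\<^sup>+i. emeasure lebesgue (?B i) \<partial>count_space C)"
    by (intro nn_integral_cong ball_eq)
  also have "\<dots> = emeasure lebesgue V"
    unfolding V_def using C disj by (intro emeasure_UN_countable[symmetric]) auto
  finally have TVV: "emeasure lebesgue (T ` V) = emeasure lebesgue V" .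
  have "negligible (T ` (U - V))"
    using null T orthogonal_transformation_linear linear_imp_differentiable_on
    by (intro negligible_differentiable_image_negligible) (auto simp: V_def)
  moreover have "open V" "open (T ` V)"
    unfolding TV by (auto simp: V_def)
  ultimately have "emeasure lebesgue (T ` V \<union> T ` (U - V)) = emeasure lebesgue (T ` V)"
    by (intro emeasure_Un_null_set) (auto simp: negligible_iff_null_sets)
  moreover have "emeasure lebesgue (V \<union> (U - V)) = emeasure lebesgue V"
    using null \<open>open V\<close> unfolding V_def
    by (intro emeasure_Un_null_set) (auto simp: negligible_iff_null_sets)
  ultimately show ?thesis
    using VU TVV by (simp add: Un_absorb1 flip: image_Un)
qed

definition ball_overlap :: "real \<Rightarrow> real^'n \<Rightarrow> real" where
  "ball_overlap r z = measure lborel (ball 0 r \<inter> ball z r)"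

lemma ball_overlap_nonneg: "ball_overlap r z \<ge> 0"
  by (simp add: ball_overlap_def)

lemma measure_ball_Int_ball: "measure lborel (ball p r \<inter> ball q r) = ball_overlap r (q - p)"
proof -
  have "ball p r \<inter> ball q r = (+) p ` (ball 0 r \<inter> ball (q - p) r)"
    using ball_translation[of p 0 r] ball_translation[of p "q - p" r] by (simp add: translation_Int)
  then have "measure lebesgue (ball p r \<inter> ball q r) = measure lebesgue (ball 0 r \<inter> ball (q - p) r)"
    by (simp only: measure_translation)
  then show ?thesis
    by (simp add: ball_overlap_def)
qed

lemma ball_overlap_norm_eq:
  fixes z w :: "real^'n"
  assumes "norm z = norm w"
  shows "ball_overlap r z = ball_overlap r w"
proof -
  obtain T where T: "orthogonal_transformation T" "T z = w"
    using orthogonal_transformation_exists[OF assms] by blast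
  then have "T ` (ball 0 r \<inter> ball z r) = ball 0 r \<inter> ball w r"
    by (simp add: image_Int orthogonal_transformation_inj image_orthogonal_transformation_ball
        orthogonal_transformation_linear linear_0)
  moreover have "emeasure lebesgue (T ` (ball 0 r \<inter> ball z r)) = emeasure lebesgue (ball 0 r \<inter> ball z r)"
    using T by (intro emeasure_orthogonal_image_open) auto
  ultimately show ?thesis
    by (simp add: ball_overlap_def measure_def)
qed

text \<open>Both \<open>y \<pm> \<theta> c\<close> are convex combinations of \<open>y + c\<close> and \<open>y - c\<close>, so the lens
  \<open>ball (- c) r \<inter> ball c r\<close> grows when its centres move towards each other.\<close>
lemma ball_overlap_scaleR_ge:
  fixes w :: "real^'n"
  assumes "0 \<le> \<theta>" "\<theta> \<le> 1"
  shows "ball_overlap r w \<le> ball_overlap r (\<theta> *\<^sub>R w)"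
proof -
  have lens: "ball_overlap r (2 *\<^sub>R c) = measure lborel (ball (- c) r \<inter> ball c r)" for c :: "real^'n"
    using measure_ball_Int_ball[of "- c" r c] by (simp add: scaleR_2)
  have mem: "y \<in> ball (- c) r \<inter> ball c r \<longleftrightarrow> y + c \<in> ball 0 r \<and> y - c \<in> ball 0 r" for y c :: "real^'n"
    by (simp add: dist_norm norm_minus_commute) (metis add.commute minus_add_distrib norm_minus_cancel)
  define c where "c = (1/2) *\<^sub>R w"
  have "ball (- c) r \<inter> ball c r \<subseteq> ball (- (\<theta> *\<^sub>R c)) r \<inter> ball (\<theta> *\<^sub>R c) r"
  proof
    fix y assume "y \<in> ball (- c) r \<inter> ball c r"
    then have u: "y + c \<in> ball 0 r" and v: "y - c \<in> ball 0 r"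
      unfolding mem by auto
    have a: "0 \<le> (1 + \<theta>) / 2" "0 \<le> (1 - \<theta>) / 2" "(1 + \<theta>) / 2 + (1 - \<theta>) / 2 = 1"
      using assms by (auto simp: field_simps)
    have "y + \<theta> *\<^sub>R c = ((1 + \<theta>) / 2) *\<^sub>R (y + c) + ((1 - \<theta>) / 2) *\<^sub>R (y - c)"
      "y - \<theta> *\<^sub>R c = ((1 - \<theta>) / 2) *\<^sub>R (y + c) + ((1 + \<theta>) / 2) *\<^sub>R (y - c)"
      by (simp_all add: vec_eq_iff field_simps)
    then show "y \<in> ball (- (\<theta> *\<^sub>R c)) r \<inter> ball (\<theta> *\<^sub>R c) r"
      unfolding mem using convexD[OF convex_ball u v a] convexD[OF convex_ball u v a(2,1)] a(3)
      by (simp add: add.commute)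
  qed
  then have "measure lebesgue (ball (- c) r \<inter> ball c r)
      \<le> measure lebesgue (ball (- (\<theta> *\<^sub>R c)) r \<inter> ball (\<theta> *\<^sub>R c) r)"
    by (intro measure_mono_fmeasurable) (auto intro: fmeasurable_Int_fmeasurable)
  then show ?thesis
    using lens[of c] lens[of "\<theta> *\<^sub>R c"] by (simp add: c_def)
qed

lemma ball_overlap_antimono:
  fixes z w :: "real^'n"
  assumes "norm z \<le> norm w"
  shows "ball_overlap r w \<le> ball_overlap r z"
proof (cases "w = 0")
  case False
  define \<theta> where "\<theta> = norm z / norm w"
  have "0 \<le> \<theta>" "\<theta> \<le> 1"
    using assms False by (auto simp: \<theta>_def)
  then have "ball_overlap r w \<le> ball_overlap r (\<theta> *\<^sub>R w)"
    by (rule ball_overlap_scaleR_ge)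
  also have "\<dots> = ball_overlap r z"
    using False by (intro ball_overlap_norm_eq) (simp add: \<theta>_def)
  finally show ?thesis .
qed (use assms in simp)

lemma ball_overlap_eq_0:
  fixes z :: "real^'n"
  assumes "2 * r \<le> norm z"
  shows "ball_overlap r z = 0"
proof -
  have "ball 0 r \<inter> ball z r = {}"
  proof (rule ccontr)
    assume "ball 0 r \<inter> ball z r \<noteq> {}"
    then obtain y where "norm y < r" "norm (z - y) < r"
      by (auto simp: dist_norm)
    then show False
      using assms norm_triangle_ineq[of y "z - y"] by simp
  qed
  then show ?thesis
    by (simp add: ball_overlap_def)
qed

lemma ball_overlap_0:
  "r \<ge> 0 \<Longrightarrow> ball_overlap r (0::real^'n) = unit_ball_vol TYPE('n) * r ^ CARD('n)"
  by (simp add: ball_overlap_def measure_ball_eq)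

lemma nn_integral_ball_overlap:
  assumes "r \<ge> 0"
  shows "(\<integral>\<^sup>+ z. ball_overlap r z \<partial>(lborel::(real^'n) measure))
    = ennreal ((unit_ball_vol TYPE('n) * r ^ CARD('n))\<^sup>2)"
proof -
  let ?v = "unit_ball_vol TYPE('n) * r ^ CARD('n)"
  let ?f = "\<lambda>y z::real^'n. indicator (ball 0 r) y * indicator (ball y r) z :: ennreal"
  have "?f y z = indicator {p. norm (fst p) < r \<and> dist (fst p) (snd p) < r} (y, z)" for y z
    by (simp add: indicator_def)
  moreover have "open {p::(real^'n) \<times> (real^'n). norm (fst p) < r \<and> dist (fst p) (snd p) < r}"
    by (intro open_Collect_conj open_Collect_less continuous_intros)
  ultimately have meas: "(\<lambda>(y, z). ?f y z) \<in> borel_measurable (lborel \<Otimes>\<^sub>M lborel)"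
    by (simp add: borel_prod[symmetric] cong: measurable_cong_sets)
  have slice: "ennreal (ball_overlap r z) = (\<integral>\<^sup>+ y. ?f y z \<partial>lborel)" for z
  proof -
    have "ball 0 r \<inter> ball z r \<in> fmeasurable lborel"
      using emeasure_lborel_ball_finite[of "0::real^'n" r]
      by (intro fmeasurable_Int_fmeasurable) (auto simp: fmeasurable_def)
    then have "ennreal (ball_overlap r z) = emeasure lborel (ball 0 r \<inter> ball z r)"
      by (simp add: ball_overlap_def emeasure_eq_measure2)
    also have "\<dots> = (\<integral>\<^sup>+ y. ?f y z \<partial>lborel)"
      by (simp flip: nn_integral_indicator) (intro nn_integral_cong, simp add: indicator_def dist_commute)
    finally show ?thesis .
  qed
  have "(\<integral>\<^sup>+ z. ball_overlap r z \<partial>(lborel::(real^'n) measure)) = (\<integral>\<^sup>+ z. (\<integral>\<^sup>+ y. ?f y z \<partial>lborel) \<partial>lborel)"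
    by (intro nn_integral_cong slice)
  also have "\<dots> = (\<integral>\<^sup>+ y. (\<integral>\<^sup>+ z. ?f y z \<partial>lborel) \<partial>lborel)"
    using lborel_pair.Fubini'[OF meas] by simp
  also have "\<dots> = (\<integral>\<^sup>+ y. indicator (ball 0 r) y * ennreal ?v \<partial>(lborel::(real^'n) measure))"
    using assms by (intro nn_integral_cong) (simp add: nn_integral_cmult_indicator emeasure_ball_eq)
  also have "\<dots> = ennreal ?v * ennreal ?v"
    using assms by (subst nn_integral_multc) (auto simp: emeasure_ball_eq intro: borel_measurable_indicator)
  finally show ?thesis
    using unit_ball_vol_pos[where 'n='n] assms by (simp add: power2_eq_square ennreal_mult)
qed

section \<open>Summation over shells of equal volume\<close>

lemma antitone_le_grid_sum:
  fixes \<phi> :: "real \<Rightarrow> real" and g :: "nat \<Rightarrow> real"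
  assumes anti: "\<And>s t. 0 \<le> s \<Longrightarrow> s \<le> t \<Longrightarrow> \<phi> t \<le> \<phi> s"
    and g: "incseq g" "g 0 = 0" and vanish: "\<phi> (g M) = 0" and "0 \<le> t"
  shows "\<phi> t \<le> (\<Sum>j<M. (\<phi> (g j) - \<phi> (g (Suc j))) * of_bool (t \<le> g (Suc j)))"
proof -
  have g_nonneg: "0 \<le> g j" for j
    using g incseq_SucD[of g] by (metis le0 incseq_def)
  have steps_nonneg: "0 \<le> \<phi> (g j) - \<phi> (g (Suc j))" for j
    using anti[OF g_nonneg] g(1) by (simp add: incseq_SucD)
  show ?thesis
  proof (cases "g M \<le> t")
    case True
    then have "\<phi> t \<le> 0"
      using anti[OF g_nonneg] vanish by metis
    also have "0 \<le> (\<Sum>j<M. (\<phi> (g j) - \<phi> (g (Suc j))) * of_bool (t \<le> g (Suc j)))"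
      using steps_nonneg by (intro sum_nonneg) simp
    finally show ?thesis .
  next
    case False
    define k where "k = Max {j. j \<le> M \<and> g j \<le> t}"
    have fin: "finite {j. j \<le> M \<and> g j \<le> t}"
      by simp
    have "k \<in> {j. j \<le> M \<and> g j \<le> t}"
      unfolding k_def using fin g(2) \<open>0 \<le> t\<close> by (intro Max_in) auto
    moreover have "Suc k \<notin> {j. j \<le> M \<and> g j \<le> t}"
      using Max_ge[OF fin, of "Suc k"] unfolding k_def[symmetric] by auto
    ultimately have "k \<le> M" "g k \<le> t" "Suc k \<le> M \<Longrightarrow> t < g (Suc k)"
      by auto
    moreover have "k \<noteq> M"
      using False \<open>g k \<le> t\<close> by auto
    ultimately have k: "k < M" "g k \<le> t" "t < g (Suc k)"
      by auto
    have "\<phi> t \<le> \<phi> (g k)"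
      using anti[OF g_nonneg k(2)] .
    also have "\<dots> = (\<Sum>j\<in>{k..<M}. \<phi> (g j) - \<phi> (g (Suc j)))"
      using sum_Suc_diff'[of k M "\<lambda>j. - \<phi> (g j)"] k(1) vanish by simp
    also have "\<dots> \<le> (\<Sum>j\<in>{..<M} \<inter> {j. t \<le> g (Suc j)}. \<phi> (g j) - \<phi> (g (Suc j)))"
    proof (intro sum_mono2 steps_nonneg)
      show "{k..<M} \<subseteq> {..<M} \<inter> {j. t \<le> g (Suc j)}"
        using k(3) g(1) by (auto simp: incseq_def intro: order.trans[OF less_imp_le])
    qed auto
    finally show ?thesis
      by simp
  qed
qed

lemma sum_antitone_le_counting:
  fixes \<phi> :: "real \<Rightarrow> real" and g :: "nat \<Rightarrow> real" and \<delta> :: "'a \<Rightarrow> real"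
  assumes "\<And>s t. 0 \<le> s \<Longrightarrow> s \<le> t \<Longrightarrow> \<phi> t \<le> \<phi> s"
    and "incseq g" "g 0 = 0" "\<phi> (g M) = 0"
    and "finite Q" "\<And>q. q \<in> Q \<Longrightarrow> 0 \<le> \<delta> q"
  shows "(\<Sum>q\<in>Q. \<phi> (\<delta> q))
    \<le> (\<Sum>j<M. (\<phi> (g j) - \<phi> (g (Suc j))) * card {q\<in>Q. \<delta> q \<le> g (Suc j)})"
proof -
  have "(\<Sum>q\<in>Q. \<phi> (\<delta> q)) \<le> (\<Sum>q\<in>Q. \<Sum>j<M. (\<phi> (g j) - \<phi> (g (Suc j))) * of_bool (\<delta> q \<le> g (Suc j)))"
    using assms by (intro sum_mono antitone_le_grid_sum) auto
  also have "\<dots> = (\<Sum>j<M. (\<phi> (g j) - \<phi> (g (Suc j))) * (\<Sum>q\<in>Q. of_bool (\<delta> q \<le> g (Suc j))))"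
    by (simp add: sum.swap[of _ Q] sum_distrib_left)
  also have "\<dots> = (\<Sum>j<M. (\<phi> (g j) - \<phi> (g (Suc j))) * card {q\<in>Q. \<delta> q \<le> g (Suc j)})"
    using \<open>finite Q\<close> by (simp add: Int_def conj_commute)
  finally show ?thesis .
qed

lemma sum_diff_mult_Suc:
  fixes a :: "nat \<Rightarrow> real"
  shows "(\<Sum>j<M. (a j - a (Suc j)) * Suc j) = (\<Sum>j<M. a j) - M * a M"
  by (induction M) (auto simp: algebra_simps)

lemma sum_le_nn_integral_disjoint:
  fixes f :: "'a \<Rightarrow> ennreal"
  assumes "finite J" "disjoint_family_on A J" "\<And>j. j \<in> J \<Longrightarrow> A j \<in> sets M"
    and "\<And>j x. j \<in> J \<Longrightarrow> x \<in> A j \<Longrightarrow> c j \<le> f x"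
  shows "(\<Sum>j\<in>J. c j * emeasure M (A j)) \<le> (\<integral>\<^sup>+x. f x \<partial>M)"
proof -
  have "(\<Sum>j\<in>J. c j * indicator (A j) x) \<le> f x" for x
  proof (cases "\<exists>k\<in>J. x \<in> A k")
    case True
    then obtain k where k: "k \<in> J" "x \<in> A k" by blast
    have "x \<notin> A j" if "j \<in> J - {k}" for j
      using assms(2) k that by (auto simp: disjoint_family_on_def)
    then have "(\<Sum>j\<in>J - {k}. c j * indicator (A j) x) = 0"
      by (intro sum.neutral) simp
    then have "(\<Sum>j\<in>J. c j * indicator (A j) x) = c k"
      using k sum.remove[OF assms(1) k(1), of "\<lambda>j. c j * indicator (A j) x"] by simp
    then show ?thesis
      using assms(4) k by simp
  qed (auto intro: order.trans[OF _ zero_le])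
  then have "(\<integral>\<^sup>+x. (\<Sum>j\<in>J. c j * indicator (A j) x) \<partial>M) \<le> (\<integral>\<^sup>+x. f x \<partial>M)"
    by (intro nn_integral_mono)
  moreover have "(\<integral>\<^sup>+x. (\<Sum>j\<in>J. c j * indicator (A j) x) \<partial>M) = (\<Sum>j\<in>J. c j * emeasure M (A j))"
    using assms(3) by (subst nn_integral_sum) (auto intro!: sum.cong nn_integral_cmult_indicator)
  ultimately show ?thesis
    by simp
qed

lemma emeasure_annulus:
  assumes "0 \<le> a" "a \<le> b"
  shows "emeasure lborel {z::real^'n. a < norm z \<and> norm z \<le> b}
    = ennreal (unit_ball_vol TYPE('n) * (b ^ CARD('n) - a ^ CARD('n)))"
proof -
  have "{z::real^'n. a < norm z \<and> norm z \<le> b} = cball 0 b - cball 0 a"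
    by auto
  moreover have "emeasure lborel (cball (0::real^'n) b - cball 0 a) \<noteq> \<infinity>"
    using emeasure_mono[of "cball 0 b - cball 0 a" "cball (0::real^'n) b" lborel]
      emeasure_lborel_cball_finite[of "0::real^'n" b] by (auto simp: top_unique)
  moreover have "measure lborel (cball (0::real^'n) b - cball 0 a)
      = measure lborel (cball (0::real^'n) b) - measure lborel (cball (0::real^'n) a)"
    using assms emeasure_lborel_cball_finite[of "0::real^'n" b]
    by (intro measure_Diff) (auto simp: less_top)
  ultimately show ?thesis
    using assms by (simp add: emeasure_eq_ennreal_measure measure_cball_eq right_diff_distrib)
qed

definition shell_radius :: "nat \<Rightarrow> nat \<Rightarrow> real \<Rightarrow> nat \<Rightarrow> real" where
  "shell_radius d M R j = R * root d (real j / real M)"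

lemma shell_radius_0 [simp]: "shell_radius d M R 0 = 0"
  by (simp add: shell_radius_def)

lemma shell_radius_nonneg: "R \<ge> 0 \<Longrightarrow> shell_radius d M R j \<ge> 0"
  by (simp add: shell_radius_def real_root_ge_zero)

lemma shell_radius_last: "M > 0 \<Longrightarrow> d > 0 \<Longrightarrow> shell_radius d M R M = R"
  by (simp add: shell_radius_def)

lemma incseq_shell_radius: "R \<ge> 0 \<Longrightarrow> d > 0 \<Longrightarrow> incseq (shell_radius d M R)"
  by (auto simp: incseq_def shell_radius_def intro!: mult_left_mono divide_right_mono)

lemma shell_radius_power:
  "d > 0 \<Longrightarrow> R \<ge> 0 \<Longrightarrow> shell_radius d M R j ^ d = R ^ d * j / M"
  by (simp add: shell_radius_def power_mult_distrib)

lemma ball_overlap_shell_lower_sum_le: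
  fixes e :: "real^'n" and M :: nat
  assumes e: "norm e = 1" and r: "r > 0"
  defines "g \<equiv> shell_radius CARD('n) M (2 * r)"
  shows "unit_ball_vol TYPE('n) * (2 * r) ^ CARD('n) / M * (\<Sum>j<M. ball_overlap r (g (Suc j) *\<^sub>R e))
    \<le> (unit_ball_vol TYPE('n) * r ^ CARD('n))\<^sup>2"
proof -
  define \<omega> where "\<omega> = unit_ball_vol TYPE('n)"
  define d where "d = CARD('n)"
  define \<Delta> where "\<Delta> = \<omega> * (2 * r) ^ d / M"
  let ?A = "\<lambda>j. {z::real^'n. g j < norm z \<and> norm z \<le> g (Suc j)}"
  have g_nonneg: "0 \<le> g j" for j
    using r by (simp add: g_def shell_radius_nonneg)
  have g_mono: "g j \<le> g k" if "j \<le> k" for j k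
    using r that incseq_shell_radius[of "2 * r" "CARD('n)" M] by (simp add: g_def incseq_def)
  have "emeasure lborel (?A j) = ennreal (\<omega> * (g (Suc j) ^ d - g j ^ d))" for j
    using emeasure_annulus[OF g_nonneg g_mono[of j "Suc j"]] by (simp add: \<omega>_def d_def)
  moreover have "\<omega> * g j ^ d = \<Delta> * j" for j
    using r by (simp add: g_def \<Delta>_def d_def shell_radius_power)
  ultimately have shell: "emeasure lborel (?A j) = ennreal \<Delta>" for j
    by (simp add: right_diff_distrib algebra_simps)
  have "0 \<le> \<Delta>"
    using r by (simp add: \<Delta>_def \<omega>_def unit_ball_vol_pos less_imp_le)
  then have "ennreal (\<Delta> * (\<Sum>j<M. ball_overlap r (g (Suc j) *\<^sub>R e)))
      = (\<Sum>j<M. ennreal (ball_overlap r (g (Suc j) *\<^sub>R e) * \<Delta>))"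
    by (simp add: sum_distrib_left mult.commute ball_overlap_nonneg)
  also have "\<dots> = (\<Sum>j<M. ennreal (ball_overlap r (g (Suc j) *\<^sub>R e)) * emeasure lborel (?A j))"
    using \<open>0 \<le> \<Delta>\<close> by (simp add: shell ennreal_mult ball_overlap_nonneg)
  also have "\<dots> \<le> (\<integral>\<^sup>+ z. ball_overlap r z \<partial>(lborel::(real^'n) measure))"
  proof (rule sum_le_nn_integral_disjoint)
    have disj: "?A i \<inter> ?A j = {}" if "i < j" for i j
      using g_mono[of "Suc i" j] that by auto
    show "disjoint_family_on ?A {..<M}"
      unfolding disjoint_family_on_def
    proof (intro ballI impI)
      fix i j :: nat
      assume "i \<noteq> j"
      then consider "i < j" | "j < i"
        by linarith
      then show "?A i \<inter> ?A j = {}"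
        using disj[of i j] disj[of j i] by cases blast+
    qed
    show "ennreal (ball_overlap r (g (Suc j) *\<^sub>R e)) \<le> ennreal (ball_overlap r z)" if "z \<in> ?A j" for j z
      using that e g_nonneg[of "Suc j"] by (auto intro!: ennreal_leI ball_overlap_antimono)
  qed auto
  also have "\<dots> = ennreal ((\<omega> * r ^ d)\<^sup>2)"
    using r by (simp add: nn_integral_ball_overlap \<omega>_def d_def)
  finally show ?thesis
    by (simp add: \<Delta>_def \<omega>_def d_def ennreal_le_iff)
qed

text \<open>The radii g j cut the ball of radius 2r into M shells of equal volume \<Delta>, so by Abel
  summation the left-hand side is \<Delta> \<Sum>_(j<M) \<phi> (g j) with \<phi> t = ball_overlap r (t e). This
  Riemann sum exceeds the lower sum, which the integral of ball_overlap r dominates, by \<Delta> \<phi> 0.\<close>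
lemma ball_overlap_shell_sum_le:
  fixes e :: "real^'n"
  assumes e: "norm e = 1" and r: "r > 0" and M: "M > 0"
  defines "g \<equiv> shell_radius CARD('n) M (2 * r)"
  shows "(\<Sum>j<M. (ball_overlap r (g j *\<^sub>R e) - ball_overlap r (g (Suc j) *\<^sub>R e))
      * (unit_ball_vol TYPE('n) * g (Suc j) ^ CARD('n)))
    \<le> (unit_ball_vol TYPE('n) * r ^ CARD('n))\<^sup>2 * (1 + 2 ^ CARD('n) / M)"
proof -
  define \<omega> where "\<omega> = unit_ball_vol TYPE('n)"
  define d where "d = CARD('n)"
  define \<Delta> where "\<Delta> = \<omega> * (2 * r) ^ d / M"
  define \<phi> where "\<phi> = (\<lambda>j. ball_overlap r (g j *\<^sub>R e))"
  have vol_g: "\<omega> * g j ^ d = \<Delta> * j" for j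
    using r by (simp add: g_def \<Delta>_def d_def shell_radius_power)
  have "\<phi> M = 0"
    using e r M by (simp add: \<phi>_def g_def shell_radius_last ball_overlap_eq_0)
  have "(\<Sum>j<M. (\<phi> j - \<phi> (Suc j)) * (\<omega> * g (Suc j) ^ d)) = \<Delta> * (\<Sum>j<M. (\<phi> j - \<phi> (Suc j)) * Suc j)"
    by (simp only: vol_g sum_distrib_left mult_ac)
  also have "\<dots> = \<Delta> * \<phi> 0 + \<Delta> * (\<Sum>j<M. \<phi> (Suc j))"
    using sum.lessThan_Suc_shift[of \<phi> M] \<open>\<phi> M = 0\<close>
    by (simp only: sum_diff_mult_Suc) (simp add: algebra_simps)
  also have "\<Delta> * \<phi> 0 = (\<omega> * r ^ d)\<^sup>2 * (2 ^ d / M)"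
    using r by (simp add: \<Delta>_def \<phi>_def g_def ball_overlap_0 \<omega>_def d_def power2_eq_square power_mult_distrib)
  also have "\<Delta> * (\<Sum>j<M. \<phi> (Suc j)) \<le> (\<omega> * r ^ d)\<^sup>2"
    using ball_overlap_shell_lower_sum_le[OF e r, of M] by (simp add: \<Delta>_def \<phi>_def g_def \<omega>_def d_def)
  finally show ?thesis
    by (simp add: \<phi>_def \<omega>_def d_def algebra_simps)
qed

section \<open>Mass of the balls in a box\<close>

lemma abs_integral_indicator_mult_le:
  fixes F :: "'a \<Rightarrow> real"
  assumes \<tau>: "\<tau> > 0" and W: "W \<in> sets M" "emeasure M W < \<infinity>" and F: "\<And>y. y \<notin> W \<Longrightarrow> F y = 0"
    and int_GF: "has_bochner_integral M (\<lambda>y. indicator G y * F y) a"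
    and int_F2: "has_bochner_integral M (\<lambda>y. (F y)\<^sup>2) e"
  shows "\<bar>a\<bar> \<le> e / (2 * \<tau>) + \<tau> * measure M W / 2"
proof -
  have int_bound: "has_bochner_integral M (\<lambda>y. (F y)\<^sup>2 / (2 * \<tau>) + \<tau> / 2 * indicator W y)
      (e / (2 * \<tau>) + \<tau> / 2 * measure M W)"
    using W int_F2 by (intro has_bochner_integral_add has_bochner_integral_divide_zero
        has_bochner_integral_mult_right has_bochner_integral_real_indicator) auto
  have pointwise: "\<bar>indicator G y * F y\<bar> \<le> (F y)\<^sup>2 / (2 * \<tau>) + \<tau> / 2 * indicator W y" for y
  proof (cases "y \<in> W")
    case True
    have "2 * \<tau> * \<bar>F y\<bar> \<le> (F y)\<^sup>2 + \<tau>\<^sup>2"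
      using sum_squares_bound[of "\<bar>F y\<bar>" \<tau>] by (simp add: power2_eq_square algebra_simps)
    then have "\<bar>F y\<bar> \<le> (F y)\<^sup>2 / (2 * \<tau>) + \<tau> / 2"
      using \<tau> by (simp add: field_simps power2_eq_square)
    then show ?thesis
      using True by (auto simp: indicator_def intro: order.trans[OF abs_ge_zero])
  qed (use F \<tau> in simp)
  have "\<bar>integral\<^sup>L M (\<lambda>y. indicator G y * F y)\<bar> \<le> integral\<^sup>L M (\<lambda>y. \<bar>indicator G y * F y\<bar>)"
    by (rule integral_abs_bound)
  also have "\<dots> \<le> integral\<^sup>L M (\<lambda>y. (F y)\<^sup>2 / (2 * \<tau>) + \<tau> / 2 * indicator W y)"
    using int_GF int_bound pointwise by (intro integral_mono) (auto simp: has_bochner_integral_iff)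
  finally show ?thesis
    using int_GF int_bound by (simp add: has_bochner_integral_integral_eq)
qed

text \<open>With F = \<Sum>_n 1_(B n) - \<kappa> 1_W, the left-hand side is |\<integral>_G F| and the numerator on the
  right is \<integral> F^2.\<close>
lemma sum_measure_Int_deviation_le:
  fixes B :: "'i \<Rightarrow> 'a set" and \<kappa> \<tau> :: real
  assumes I: "finite I" and \<tau>: "\<tau> > 0"
    and W: "W \<in> sets M" "emeasure M W < \<infinity>" and G: "G \<in> sets M" "G \<subseteq> W"
    and B: "\<And>n. n \<in> I \<Longrightarrow> B n \<in> sets M" "\<And>n. n \<in> I \<Longrightarrow> B n \<subseteq> W"
  shows "\<bar>(\<Sum>n\<in>I. measure M (B n \<inter> G)) - \<kappa> * measure M G\<bar>
    \<le> ((\<Sum>m\<in>I. \<Sum>n\<in>I. measure M (B m \<inter> B n)) - 2 * \<kappa> * (\<Sum>n\<in>I. measure M (B n))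
        + \<kappa>\<^sup>2 * measure M W) / (2 * \<tau>) + \<tau> * measure M W / 2"
proof -
  let ?i = "\<lambda>S y. indicator S y :: real"
  have ind: "has_bochner_integral M (?i S) (measure M S)" if "S \<in> sets M" "S \<subseteq> W" for S
    using that W emeasure_mono[OF that(2) W(1)]
    by (intro has_bochner_integral_real_indicator) (auto simp: order.strict_trans1)
  define F where "F y = (\<Sum>n\<in>I. ?i (B n) y) - \<kappa> * ?i W y" for y
  have F_outside: "F y = 0" if "y \<notin> W" for y
    using B(2) that by (auto simp: F_def indicator_def subset_iff intro!: sum.neutral)
  have "?i G y * F y = (\<Sum>n\<in>I. ?i (B n \<inter> G) y) - \<kappa> * ?i G y" for y
    using G(2) by (auto simp: F_def indicator_def sum_distrib_left intro!: sum.cong)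
  moreover have "has_bochner_integral M (\<lambda>y. (\<Sum>n\<in>I. ?i (B n \<inter> G) y) - \<kappa> * ?i G y)
      ((\<Sum>n\<in>I. measure M (B n \<inter> G)) - \<kappa> * measure M G)"
    using B G by (intro has_bochner_integral_diff has_bochner_integral_sum has_bochner_integral_mult_right ind) auto
  ultimately have int_GF: "has_bochner_integral M (\<lambda>y. ?i G y * F y)
      ((\<Sum>n\<in>I. measure M (B n \<inter> G)) - \<kappa> * measure M G)"
    by simp
  have "(F y)\<^sup>2 = (\<Sum>m\<in>I. \<Sum>n\<in>I. ?i (B m \<inter> B n) y) - 2 * \<kappa> * (\<Sum>n\<in>I. ?i (B n) y) + \<kappa>\<^sup>2 * ?i W y" for y
  proof (cases "y \<in> W")
    case True
    then show ?thesis
      by (simp add: F_def power2_eq_square sum_product indicator_inter_arith algebra_simps)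
  next
    case False
    then have "y \<notin> B n" if "n \<in> I" for n
      using B(2) that by blast
    then show ?thesis
      using False F_outside by (simp add: indicator_def)
  qed
  moreover have "has_bochner_integral M (\<lambda>y. (\<Sum>m\<in>I. \<Sum>n\<in>I. ?i (B m \<inter> B n) y)
      - 2 * \<kappa> * (\<Sum>n\<in>I. ?i (B n) y) + \<kappa>\<^sup>2 * ?i W y)
    ((\<Sum>m\<in>I. \<Sum>n\<in>I. measure M (B m \<inter> B n)) - 2 * \<kappa> * (\<Sum>n\<in>I. measure M (B n)) + \<kappa>\<^sup>2 * measure M W)"
    using B W by (intro has_bochner_integral_add has_bochner_integral_diff has_bochner_integral_sum
        has_bochner_integral_mult_right ind) auto
  ultimately have "has_bochner_integral M (\<lambda>y. (F y)\<^sup>2)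
    ((\<Sum>m\<in>I. \<Sum>n\<in>I. measure M (B m \<inter> B n)) - 2 * \<kappa> * (\<Sum>n\<in>I. measure M (B n)) + \<kappa>\<^sup>2 * measure M W)"
    by simp
  then show ?thesis
    using abs_integral_indicator_mult_le[OF \<tau> W F_outside int_GF] by simp
qed

definition pair_count :: "('i \<Rightarrow> 'i \<Rightarrow> real) \<Rightarrow> 'i set \<Rightarrow> real \<Rightarrow> nat" where
  "pair_count \<delta> I t = card {(m, n). m \<in> I \<and> n \<in> I \<and> m \<noteq> n \<and> \<delta> m n \<le> t}"

lemma sum_ball_overlap_pairs_le:
  fixes p :: "'i \<Rightarrow> real^'n" and \<delta> :: "'i \<Rightarrow> 'i \<Rightarrow> real" and I :: "'i set" and r :: real and M :: nat
  defines "g \<equiv> shell_radius CARD('n) M (2 * r)"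
    and "\<kappa> \<equiv> card I * unit_ball_vol TYPE('n) * r ^ CARD('n)"
  assumes I: "finite I" and r: "r > 0" and M: "M > 0"
    and \<delta>: "\<And>m n. 0 \<le> \<delta> m n" "\<And>m n. \<delta> m n \<le> dist (p m) (p n)"
    and counts: "\<And>j. j < M \<Longrightarrow> pair_count \<delta> I (g (Suc j))
      \<le> card I * (card I * unit_ball_vol TYPE('n) * g (Suc j) ^ CARD('n) + 1)"
  shows "(\<Sum>(m, n)\<in>{(m, n). m \<in> I \<and> n \<in> I \<and> m \<noteq> n}. ball_overlap r (p n - p m))
    \<le> \<kappa>\<^sup>2 * (1 + 2 ^ CARD('n) / M) + \<kappa>"
proof -
  define \<omega> where "\<omega> = unit_ball_vol TYPE('n)"
  define d where "d = CARD('n)"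
  define N where "N = real (card I)"
  define Off where "Off = {(m, n). m \<in> I \<and> n \<in> I \<and> m \<noteq> n}"
  obtain e :: "real^'n" where e: "norm e = 1"
    using norm_axis_1 by blast
  define \<phi> where "\<phi> t = ball_overlap r (t *\<^sub>R e)" for t
  have \<phi>_anti: "\<phi> t \<le> \<phi> s" if "0 \<le> s" "s \<le> t" for s t
    using that e by (auto simp: \<phi>_def intro: ball_overlap_antimono)
  have g: "incseq g" "g 0 = 0" "g M = 2 * r"
    using r M by (simp_all add: g_def incseq_shell_radius shell_radius_last)
  then have \<phi>_last: "\<phi> (g M) = 0"
    using e by (simp add: \<phi>_def ball_overlap_eq_0)
  have steps: "0 \<le> \<phi> (g j) - \<phi> (g (Suc j))" for j
    using g(1) incseq_SucD[of g] shell_radius_nonneg[of "2 * r"] r by (simp add: \<phi>_anti g_def)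
  have "(\<Sum>(m, n)\<in>Off. ball_overlap r (p n - p m)) \<le> (\<Sum>(m, n)\<in>Off. \<phi> (\<delta> m n))"
    using \<delta> e by (intro sum_mono) (auto simp: \<phi>_def dist_norm norm_minus_commute intro!: ball_overlap_antimono)
  also have "\<dots> = (\<Sum>q\<in>Off. \<phi> (case_prod \<delta> q))"
    by (simp add: split_def)
  also have "\<dots> \<le> (\<Sum>j<M. (\<phi> (g j) - \<phi> (g (Suc j))) * card {q\<in>Off. case_prod \<delta> q \<le> g (Suc j)})"
  proof (rule sum_antitone_le_counting)
    show "finite Off"
      using I by (auto simp: Off_def intro: finite_subset[of _ "I \<times> I"])
  qed (use \<phi>_anti g \<phi>_last \<delta>(1) in auto)
  also have "\<dots> \<le> (\<Sum>j<M. (\<phi> (g j) - \<phi> (g (Suc j))) * (N * (N * \<omega> * g (Suc j) ^ d + 1)))"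
  proof (intro sum_mono mult_left_mono steps)
    fix j assume "j \<in> {..<M}"
    then show "card {q\<in>Off. case_prod \<delta> q \<le> g (Suc j)} \<le> N * (N * \<omega> * g (Suc j) ^ d + 1)"
      using counts[of j] by (simp add: Off_def N_def \<omega>_def d_def pair_count_def case_prod_beta')
  qed
  also have "\<dots> = (\<Sum>j<M. N\<^sup>2 * ((\<phi> (g j) - \<phi> (g (Suc j))) * (\<omega> * g (Suc j) ^ d))
      + N * (\<phi> (g j) - \<phi> (g (Suc j))))"
    by (intro sum.cong refl) (simp add: power2_eq_square algebra_simps)
  also have "\<dots> = N\<^sup>2 * (\<Sum>j<M. (\<phi> (g j) - \<phi> (g (Suc j))) * (\<omega> * g (Suc j) ^ d))
      + N * (\<Sum>j<M. \<phi> (g j) - \<phi> (g (Suc j)))"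
    by (simp only: sum.distrib sum_distrib_left)
  also have "\<dots> \<le> N\<^sup>2 * ((\<omega> * r ^ d)\<^sup>2 * (1 + 2 ^ d / M)) + N * (\<omega> * r ^ d)"
    using ball_overlap_shell_sum_le[OF e r M] sum_lessThan_telescope'[of "\<lambda>j. \<phi> (g j)" M] \<phi>_last r
    by (intro add_mono mult_left_mono) (simp_all add: \<phi>_def g_def \<omega>_def d_def N_def ball_overlap_0)
  finally show ?thesis
    by (simp add: Off_def \<kappa>_def N_def \<omega>_def d_def power_mult_distrib algebra_simps)
qed

lemma sum_sum_split_diagonal:
  assumes "finite I"
  shows "(\<Sum>m\<in>I. \<Sum>n\<in>I. f m n) = (\<Sum>m\<in>I. f m m) + (\<Sum>(m, n)\<in>{(m, n). m \<in> I \<and> n \<in> I \<and> m \<noteq> n}. f m n)"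
proof -
  have "{(m, n). m \<in> I \<and> n \<in> I \<and> m \<noteq> n} = Sigma I (\<lambda>m. I - {m})"
    by auto
  then show ?thesis
    using assms by (simp add: sum.remove sum.distrib sum.Sigma)
qed

lemma sum_measure_ball_Int_deviation_le:
  fixes p :: "'i \<Rightarrow> real^'n" and \<delta> :: "'i \<Rightarrow> 'i \<Rightarrow> real" and I :: "'i set" and r :: real and M :: nat
  defines "g \<equiv> shell_radius CARD('n) M (2 * r)"
    and "\<kappa> \<equiv> card I * unit_ball_vol TYPE('n) * r ^ CARD('n)"
  assumes I: "finite I" "I \<noteq> {}" and r: "r > 0" and M: "M > 0" and \<eta>: "\<eta> > 0"
    and \<delta>: "\<And>m n. 0 \<le> \<delta> m n" "\<And>m n. \<delta> m n \<le> dist (p m) (p n)"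
    and counts: "\<And>j. j < M \<Longrightarrow> pair_count \<delta> I (g (Suc j))
      \<le> card I * (card I * unit_ball_vol TYPE('n) * g (Suc j) ^ CARD('n) + 1)"
    and W: "W \<in> sets lborel" "emeasure lborel W < \<infinity>" "\<And>n. n \<in> I \<Longrightarrow> ball (p n) r \<subseteq> W"
    and G: "G \<in> sets lborel" "G \<subseteq> W"
  shows "\<bar>(\<Sum>n\<in>I. measure lborel (ball (p n) r \<inter> G)) / \<kappa> - measure lborel G\<bar>
    \<le> (2 / \<kappa> + 2 ^ CARD('n) / M + measure lborel W - 1) / (2 * \<eta>) + \<eta> * measure lborel W / 2"
proof -
  define V where "V = measure lborel W"
  have \<kappa>: "\<kappa> > 0"
    using I r by (simp add: \<kappa>_def unit_ball_vol_pos card_gt_0_iff)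
  have mass: "(\<Sum>n\<in>I. measure lborel (ball (p n) r)) = \<kappa>"
    using r by (simp add: \<kappa>_def measure_ball_eq)
  have "(\<Sum>m\<in>I. \<Sum>n\<in>I. measure lborel (ball (p m) r \<inter> ball (p n) r))
      = \<kappa> + (\<Sum>(m, n)\<in>{(m, n). m \<in> I \<and> n \<in> I \<and> m \<noteq> n}. ball_overlap r (p n - p m))"
    using I r by (simp add: sum_sum_split_diagonal measure_ball_Int_ball ball_overlap_0 \<kappa>_def)
  also have "\<dots> \<le> \<kappa> + (\<kappa>\<^sup>2 * (1 + 2 ^ CARD('n) / M) + \<kappa>)"
    using sum_ball_overlap_pairs_le[OF I(1) r M \<delta> counts[unfolded g_def]] by (simp add: \<kappa>_def algebra_simps)
  finally have energy: "(\<Sum>m\<in>I. \<Sum>n\<in>I. measure lborel (ball (p m) r \<inter> ball (p n) r))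
      - 2 * \<kappa> * (\<Sum>n\<in>I. measure lborel (ball (p n) r)) + \<kappa>\<^sup>2 * V
    \<le> 2 * \<kappa> + \<kappa>\<^sup>2 * (2 ^ CARD('n) / M + V - 1)"
    by (simp add: mass power2_eq_square algebra_simps)
  have "\<bar>(\<Sum>n\<in>I. measure lborel (ball (p n) r \<inter> G)) - \<kappa> * measure lborel G\<bar>
    \<le> ((\<Sum>m\<in>I. \<Sum>n\<in>I. measure lborel (ball (p m) r \<inter> ball (p n) r))
      - 2 * \<kappa> * (\<Sum>n\<in>I. measure lborel (ball (p n) r)) + \<kappa>\<^sup>2 * V) / (2 * (\<eta> * \<kappa>))
      + \<eta> * \<kappa> * V / 2"
    using sum_measure_Int_deviation_le[OF I(1) mult_pos_pos[OF \<eta> \<kappa>] W(1,2) G, of "\<lambda>n. ball (p n) r" \<kappa>] W(3)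
    by (simp add: V_def)
  also have "\<dots> \<le> (2 * \<kappa> + \<kappa>\<^sup>2 * (2 ^ CARD('n) / M + V - 1)) / (2 * (\<eta> * \<kappa>)) + \<eta> * \<kappa> * V / 2"
    using energy \<eta> \<kappa> by (intro add_right_mono divide_right_mono) auto
  also have "\<dots> = \<kappa> * ((2 / \<kappa> + 2 ^ CARD('n) / M + V - 1) / (2 * \<eta>) + \<eta> * V / 2)"
    using \<kappa> \<eta> by (simp add: power2_eq_square field_simps)
  finally have "\<bar>(\<Sum>n\<in>I. measure lborel (ball (p n) r \<inter> G)) - \<kappa> * measure lborel G\<bar>
    \<le> \<kappa> * ((2 / \<kappa> + 2 ^ CARD('n) / M + V - 1) / (2 * \<eta>) + \<eta> * V / 2)" .
  moreover have "(\<Sum>n\<in>I. measure lborel (ball (p n) r \<inter> G)) / \<kappa> - measure lborel G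
      = ((\<Sum>n\<in>I. measure lborel (ball (p n) r \<inter> G)) - \<kappa> * measure lborel G) / \<kappa>"
    using \<kappa> by (simp add: field_simps)
  ultimately show ?thesis
    using \<kappa> by (simp add: V_def abs_divide pos_divide_le_eq mult.commute)
qed

lemma measure_cbox_cart: "measure lborel (cbox l (u::real^'n)) = (\<Prod>i\<in>UNIV. max 0 (u$i - l$i))"
proof (cases "cbox l u = {}")
  case True
  then obtain i where "u$i < l$i"
    using interval_eq_empty_cart(2) by blast
  then have "(\<Prod>i\<in>UNIV. max 0 (u$i - l$i)) = 0"
    by (intro prod_zero) (auto intro!: exI[of _ i])
  then show ?thesis
    using True by simp
next
  case False
  then have "l$i \<le> u$i" for i
    using interval_eq_empty_cart(2) by (meson not_le)
  then show ?thesis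
    using content_cbox_cart[OF False] by (auto intro!: prod.cong)
qed

lemma measure_box_cart: "measure lborel (box l (u::real^'n)) = (\<Prod>i\<in>UNIV. max 0 (u$i - l$i))"
  using measure_cbox_cart[of l u] by (simp add: measure_lborel_box_eq measure_lborel_cbox_eq)

lemma mem_ball_component_less: "y \<in> ball c r \<Longrightarrow> \<bar>y$i - c$i\<bar> < r"
  using component_le_norm_cart[of "y - c" i] by (simp add: dist_norm norm_minus_commute)

lemma ball_subset_cbox_cart: "ball (c::real^'n) r \<subseteq> cbox (\<chi> i. c$i - r) (\<chi> i. c$i + r)"
proof
  fix y assume "y \<in> ball c r"
  show "y \<in> cbox (\<chi> i. c$i - r) (\<chi> i. c$i + r)"
    unfolding mem_box_cart
  proof
    fix i
    show "(\<chi> i. c$i - r) $ i \<le> y $ i \<and> y $ i \<le> (\<chi> i. c$i + r) $ i"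
      using mem_ball_component_less[OF \<open>y \<in> ball c r\<close>, of i] by auto
  qed
qed

lemma ball_subset_enlarged_unit_cube:
  fixes c :: "real^'n"
  assumes "\<And>i. 0 \<le> c$i \<and> c$i \<le> 1"
  shows "ball c r \<subseteq> cbox (\<chi> i. - r) (\<chi> i. 1 + r)"
proof -
  have "cbox (\<chi> i. c$i - r) (\<chi> i. c$i + r) \<subseteq> cbox (\<chi> i. - r) (\<chi> i. 1 + r :: real^'n)"
    using assms by (intro subset_interval_imp_cart(1)) auto
  with ball_subset_cbox_cart show ?thesis
    by blast
qed

lemma card_in_box_sandwich:
  fixes p :: "'i \<Rightarrow> real^'n" and I :: "'i set" and a b :: "real^'n"
  defines "Q \<equiv> {n\<in>I. \<forall>i. a$i \<le> p n $ i \<and> p n $ i < b$i}"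
  assumes "finite I" "r \<ge> 0"
  shows "card Q * (unit_ball_vol TYPE('n) * r ^ CARD('n))
      \<le> (\<Sum>n\<in>I. measure lborel (ball (p n) r \<inter> cbox (\<chi> i. a$i - r) (\<chi> i. b$i + r)))"
    and "(\<Sum>n\<in>I. measure lborel (ball (p n) r \<inter> box (\<chi> i. a$i + r) (\<chi> i. b$i - r)))
      \<le> card Q * (unit_ball_vol TYPE('n) * r ^ CARD('n))"
proof -
  have QI: "Q \<subseteq> I"
    by (auto simp: Q_def)
  have "ball (p n) r \<subseteq> cbox (\<chi> i. a$i - r) (\<chi> i. b$i + r)" if "n \<in> Q" for n
  proof -
    have "cbox (\<chi> i. p n $ i - r) (\<chi> i. p n $ i + r) \<subseteq> cbox (\<chi> i. a$i - r) (\<chi> i. b$i + r)"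
      using that by (intro subset_interval_imp_cart(1)) (auto simp: Q_def less_imp_le)
    with ball_subset_cbox_cart show ?thesis
      by blast
  qed
  then have "card Q * (unit_ball_vol TYPE('n) * r ^ CARD('n))
      = (\<Sum>n\<in>Q. measure lborel (ball (p n) r \<inter> cbox (\<chi> i. a$i - r) (\<chi> i. b$i + r)))"
    using \<open>r \<ge> 0\<close> by (simp add: Int_absorb2 measure_ball_eq)
  also have "\<dots> \<le> (\<Sum>n\<in>I. measure lborel (ball (p n) r \<inter> cbox (\<chi> i. a$i - r) (\<chi> i. b$i + r)))"
    using \<open>finite I\<close> QI by (intro sum_mono2) auto
  finally show "card Q * (unit_ball_vol TYPE('n) * r ^ CARD('n))
      \<le> (\<Sum>n\<in>I. measure lborel (ball (p n) r \<inter> cbox (\<chi> i. a$i - r) (\<chi> i. b$i + r)))" .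
  have "ball (p n) r \<inter> box (\<chi> i. a$i + r) (\<chi> i. b$i - r) = {}" if "n \<in> I - Q" for n
  proof -
    have "\<not> (a$i + r < y$i \<and> y$i < b$i - r)" if "y \<in> ball (p n) r" "\<not> (a$i \<le> p n $ i \<and> p n $ i < b$i)" for y i
      using mem_ball_component_less[OF that(1), of i] that(2) by (auto simp: abs_less_iff)
    with that show ?thesis
      by (fastforce simp: Q_def mem_box_cart)
  qed
  then have "(\<Sum>n\<in>I. measure lborel (ball (p n) r \<inter> box (\<chi> i. a$i + r) (\<chi> i. b$i - r)))
      = (\<Sum>n\<in>Q. measure lborel (ball (p n) r \<inter> box (\<chi> i. a$i + r) (\<chi> i. b$i - r)))"
    using \<open>finite I\<close> QI by (intro sum.mono_neutral_right) auto
  also have "\<dots> \<le> (\<Sum>n\<in>Q. measure lborel (ball (p n) r))"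
    using emeasure_lborel_ball_finite
    by (intro sum_mono measure_mono_fmeasurable) (auto simp: fmeasurable_def)
  finally show "(\<Sum>n\<in>I. measure lborel (ball (p n) r \<inter> box (\<chi> i. a$i + r) (\<chi> i. b$i - r)))
      \<le> card Q * (unit_ball_vol TYPE('n) * r ^ CARD('n))"
    using \<open>r \<ge> 0\<close> by (simp add: measure_ball_eq)
qed

lemma proportion_in_box_bounds:
  fixes p :: "'i \<Rightarrow> real^'n" and \<delta> :: "'i \<Rightarrow> 'i \<Rightarrow> real" and I :: "'i set"
    and r \<eta> :: real and M :: nat and a b :: "real^'n"
  defines "g \<equiv> shell_radius CARD('n) M (2 * r)"
    and "\<kappa> \<equiv> card I * unit_ball_vol TYPE('n) * r ^ CARD('n)"
    and "V \<equiv> (1 + 2 * r) ^ CARD('n)"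
    and "U \<equiv> card {n\<in>I. \<forall>i. a$i \<le> p n $ i \<and> p n $ i < b$i} / card I"
  defines "err \<equiv> (2 / \<kappa> + 2 ^ CARD('n) / M + V - 1) / (2 * \<eta>) + \<eta> * V / 2"
  assumes I: "finite I" "I \<noteq> {}" and r: "r > 0" and M: "M > 0" and \<eta>: "\<eta> > 0"
    and \<delta>: "\<And>m n. 0 \<le> \<delta> m n" "\<And>m n. \<delta> m n \<le> dist (p m) (p n)"
    and counts: "\<And>j. j < M \<Longrightarrow> pair_count \<delta> I (g (Suc j))
      \<le> card I * (card I * unit_ball_vol TYPE('n) * g (Suc j) ^ CARD('n) + 1)"
    and cube: "\<And>n i. n \<in> I \<Longrightarrow> 0 \<le> p n $ i \<and> p n $ i < 1"
    and box: "\<And>i. 0 \<le> a$i \<and> a$i \<le> b$i \<and> b$i \<le> 1"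
  shows "(\<Prod>i\<in>UNIV. max 0 (b$i - a$i - 2 * r)) - err \<le> U"
    and "U \<le> (\<Prod>i\<in>UNIV. max 0 (b$i - a$i + 2 * r)) + err"
proof -
  define W where "W = cbox (\<chi> i. - r) (\<chi> i. 1 + r :: real^'n)"
  define Gout where "Gout = cbox (\<chi> i. a$i - r) (\<chi> i. b$i + r :: real^'n)"
  define Gin where "Gin = box (\<chi> i. a$i + r) (\<chi> i. b$i - r :: real^'n)"
  let ?mass = "\<lambda>G. (\<Sum>n\<in>I. measure lborel (ball (p n) r \<inter> G)) / \<kappa>"
  have \<kappa>: "\<kappa> > 0"
    using I r by (simp add: \<kappa>_def unit_ball_vol_pos card_gt_0_iff)
  have U: "U = card {n\<in>I. \<forall>i. a$i \<le> p n $ i \<and> p n $ i < b$i} * (unit_ball_vol TYPE('n) * r ^ CARD('n)) / \<kappa>"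
    using r I unit_ball_vol_pos[where 'n='n] by (simp add: U_def \<kappa>_def card_gt_0_iff)
  have "measure lborel W = V"
    using r by (simp add: W_def V_def measure_cbox_cart add.commute)
  moreover have "ball (p n) r \<subseteq> W" if "n \<in> I" for n
    unfolding W_def using cube[OF that] by (intro ball_subset_enlarged_unit_cube) (simp add: less_imp_le)
  moreover have "Gout \<subseteq> W"
    unfolding W_def Gout_def using box by (intro subset_interval_imp_cart(1)) simp
  moreover have "Gin \<subseteq> Gout"
    unfolding Gin_def Gout_def using r by (intro subset_interval_imp_cart(3)) simp
  moreover have "emeasure lborel W < \<infinity>"
    unfolding W_def by (rule emeasure_lborel_cbox_finite)
  ultimately have dev: "\<bar>?mass G - measure lborel G\<bar> \<le> err" if "G \<in> {Gout, Gin}" for G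
    using sum_measure_ball_Int_deviation_le[OF I r M \<eta> \<delta> counts[unfolded g_def], of W G] that
    by (auto simp: err_def \<kappa>_def g_def W_def Gout_def Gin_def)
  have "measure lborel Gin - err \<le> ?mass Gin"
    using dev[of Gin] by simp
  also have "?mass Gin \<le> U"
    using card_in_box_sandwich(2)[OF I(1) less_imp_le[OF r], where p=p and a=a and b=b] \<kappa>
    by (simp add: U Gin_def divide_right_mono)
  finally show "(\<Prod>i\<in>UNIV. max 0 (b$i - a$i - 2 * r)) - err \<le> U"
    by (simp add: Gin_def measure_box_cart algebra_simps)
  have "U \<le> ?mass Gout"
    using card_in_box_sandwich(1)[OF I(1) less_imp_le[OF r], where p=p and a=a and b=b] \<kappa>
    by (simp add: U Gout_def divide_right_mono)
  also have "\<dots> \<le> measure lborel Gout + err"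
    using dev[of Gout] by simp
  finally show "U \<le> (\<Prod>i\<in>UNIV. max 0 (b$i - a$i + 2 * r)) + err"
    by (simp add: Gout_def measure_cbox_cart algebra_simps)
qed

section \<open>Pair correlations on the torus\<close>

lemma torus_frac_bounds: "0 \<le> torus_frac x $ i" "torus_frac x $ i < 1"
  by (auto simp: torus_frac_def frac_lt_1)

lemma torus_dist_nonneg: "torus_dist x y \<ge> 0"
  unfolding torus_dist_def by (rule cInf_greatest) auto

lemma torus_dist_le_dist_frac: "torus_dist x y \<le> dist (torus_frac x) (torus_frac y)"
proof -
  define k :: "int^'a" where "k = (\<chi> i. \<lfloor>x $ i\<rfloor> - \<lfloor>y $ i\<rfloor>)"
  have "torus_frac x - torus_frac y = x - y - (\<chi> i. real_of_int (k $ i))"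
    by (simp add: vec_eq_iff torus_frac_def k_def frac_def)
  then show ?thesis
    unfolding torus_dist_def dist_norm by (intro cInf_lower bdd_belowI[of _ 0]) auto
qed

lemma error_parameters_exist:
  fixes \<omega> \<epsilon> :: real and d :: nat
  assumes "\<omega> > 0" "d > 0" "\<epsilon> > 0"
  obtains c \<eta> :: real and M :: nat where "c > 0" "M > 0" "\<eta> > 0" "(2 / (\<omega> * c ^ d) + 2 ^ d / M) / (2 * \<eta>) + \<eta> / 2 < \<epsilon>"
proof -
  have "((\<lambda>c. 2 / (\<omega> * c ^ d)) \<longlongrightarrow> 0) at_top"
    using assms by real_asymp
  then have "eventually (\<lambda>c. c > 0 \<and> 2 / (\<omega> * c ^ d) < \<epsilon>\<^sup>2 / 4) at_top"
    using assms by (intro eventually_conj eventually_gt_at_top order_tendstoD(2)) auto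
  then obtain c where c: "c > 0" "2 / (\<omega> * c ^ d) < \<epsilon>\<^sup>2 / 4"
    by (auto simp: eventually_at_top_linorder)
  have "(\<lambda>M. 2 ^ d / real M) \<longlonglongrightarrow> 0"
    by real_asymp
  then have "eventually (\<lambda>M. M > 0 \<and> 2 ^ d / real M < \<epsilon>\<^sup>2 / 4) sequentially"
    using assms by (intro eventually_conj eventually_gt_at_top order_tendstoD(2)) auto
  then obtain M where M: "M > 0" "2 ^ d / real M < \<epsilon>\<^sup>2 / 4"
    by (auto simp: eventually_sequentially)
  define \<eta> where "\<eta> = \<epsilon> / 2"
  have "(2 / (\<omega> * c ^ d) + 2 ^ d / M) / (2 * \<eta>) < (\<epsilon>\<^sup>2 / 2) / (2 * \<eta>)"
  proof (rule divide_strict_right_mono)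
    show "2 / (\<omega> * c ^ d) + 2 ^ d / M < \<epsilon>\<^sup>2 / 2"
      using c(2) M(2) by linarith
  qed (use \<open>\<epsilon> > 0\<close> in \<open>simp add: \<eta>_def\<close>)
  also have "\<dots> = \<epsilon> / 2"
    using \<open>\<epsilon> > 0\<close> by (simp add: \<eta>_def power2_eq_square)
  finally have "(2 / (\<omega> * c ^ d) + 2 ^ d / M) / (2 * \<eta>) + \<eta> / 2 < \<epsilon>"
    using \<eta>_def \<open>\<epsilon> > 0\<close> by linarith
  with c M \<open>\<epsilon> > 0\<close> show ?thesis
    by (intro that[of c M \<eta>]) (auto simp: \<eta>_def)
qed

lemma eventually_pair_counts_le:
  fixes x :: "nat \<Rightarrow> real^'d"
  assumes pc: "\<forall>s > 0. (\<lambda>N. real (card {(m, n). m \<in> {1..N} \<and> n \<in> {1..N} \<and> m \<noteq> n \<and>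
               torus_dist (x m) (x n) \<le> s / root CARD('d) (real N)}) / real N)
             \<longlonglongrightarrow> unit_ball_vol TYPE('d) * s ^ CARD('d)"
    and c: "c > 0" and M: "M > 0"
  shows "eventually (\<lambda>N. \<forall>j<M.
    pair_count (\<lambda>m n. torus_dist (x m) (x n)) {1..N} (shell_radius CARD('d) M (2 * (c / root CARD('d) N)) (Suc j))
    \<le> card {1..N} * (card {1..N} * unit_ball_vol TYPE('d)
      * shell_radius CARD('d) M (2 * (c / root CARD('d) N)) (Suc j) ^ CARD('d) + 1)) sequentially"
proof -
  let ?card = "\<lambda>N. pair_count (\<lambda>m n. torus_dist (x m) (x n)) {1..N}"
  have "eventually (\<lambda>N. ?card N (shell_radius CARD('d) M (2 * (c / root CARD('d) N)) (Suc j))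
    \<le> card {1..N} * (card {1..N} * unit_ball_vol TYPE('d)
      * shell_radius CARD('d) M (2 * (c / root CARD('d) N)) (Suc j) ^ CARD('d) + 1)) sequentially" for j
  proof -
    define s where "s = shell_radius CARD('d) M (2 * c) (Suc j)"
    have "s > 0"
      using c M by (simp add: s_def shell_radius_def real_root_gt_zero)
    then have "eventually (\<lambda>N. ?card N (s / root CARD('d) N) / real N
        < unit_ball_vol TYPE('d) * s ^ CARD('d) + 1) sequentially"
      using pc by (intro order_tendstoD(2)) (auto simp: pair_count_def)
    then show ?thesis
      using eventually_gt_at_top[of 0]
    proof eventually_elim
      case (elim N)
      have radius: "shell_radius CARD('d) M (2 * (c / root CARD('d) N)) (Suc j) = s / root CARD('d) N"
        by (simp add: s_def shell_radius_def)
      have "real N * (s / root CARD('d) N) ^ CARD('d) = s ^ CARD('d)"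
        using elim(2) by (simp add: power_divide)
      then have volume: "real N * unit_ball_vol TYPE('d) * (s / root CARD('d) N) ^ CARD('d)
          = unit_ball_vol TYPE('d) * s ^ CARD('d)"
        by (metis mult.assoc mult.commute)
      have "?card N (s / root CARD('d) N) < real N * (unit_ball_vol TYPE('d) * s ^ CARD('d) + 1)"
        using elim by (simp add: pos_divide_less_eq mult.commute)
      then show ?case
        unfolding radius volume card_atLeastAtMost diff_Suc_1 by simp
    qed
  qed
  then show ?thesis
    by (intro eventually_ball_finite[of "{..<M}", THEN eventually_mono]) auto
qed

lemma eventually_proportion_in_box_close:
  fixes x :: "nat \<Rightarrow> real^'d" and a b :: "real^'d" and c \<eta> \<epsilon> :: real and M :: nat
  assumes pc: "\<forall>s > 0. (\<lambda>N. real (card {(m, n). m \<in> {1..N} \<and> n \<in> {1..N} \<and> m \<noteq> n \<and>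
               torus_dist (x m) (x n) \<le> s / root CARD('d) (real N)}) / real N)
             \<longlonglongrightarrow> unit_ball_vol TYPE('d) * s ^ CARD('d)"
    and box: "\<forall>i. 0 \<le> a $ i \<and> a $ i \<le> b $ i \<and> b $ i \<le> 1"
    and c: "c > 0" and M: "M > 0" and \<eta>: "\<eta> > 0"
    and small: "(2 / (unit_ball_vol TYPE('d) * c ^ CARD('d)) + 2 ^ CARD('d) / M) / (2 * \<eta>) + \<eta> / 2 < \<epsilon>"
  shows "eventually (\<lambda>N. \<bar>real (card {n \<in> {1..N}. \<forall>i. a $ i \<le> torus_frac (x n) $ i \<and> torus_frac (x n) $ i < b $ i})
    / real N - (\<Prod>i\<in>UNIV. b $ i - a $ i)\<bar> < \<epsilon>) sequentially"
proof -
  define \<kappa> where "\<kappa> = unit_ball_vol TYPE('d) * c ^ CARD('d)"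
  define vol where "vol = (\<Prod>i\<in>UNIV. b $ i - a $ i)"
  define r where "r N = c / root CARD('d) (real N)" for N
  define err where "err N = (2 / \<kappa> + 2 ^ CARD('d) / M + (1 + 2 * r N) ^ CARD('d) - 1) / (2 * \<eta>) + \<eta> * (1 + 2 * r N) ^ CARD('d) / 2" for N
  have "r \<longlonglongrightarrow> 0"
    unfolding r_def by real_asymp
  then have err: "err \<longlonglongrightarrow> (2 / \<kappa> + 2 ^ CARD('d) / M) / (2 * \<eta>) + \<eta> / 2"
    unfolding err_def using \<eta> by (auto intro!: tendsto_eq_intros)
  have "(\<lambda>N. \<Prod>i\<in>UNIV. max 0 (b $ i - a $ i + 2 * r N)) \<longlonglongrightarrow> vol"
    "(\<lambda>N. \<Prod>i\<in>UNIV. max 0 (b $ i - a $ i - 2 * r N)) \<longlonglongrightarrow> vol"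
    using \<open>r \<longlonglongrightarrow> 0\<close> box unfolding vol_def by (auto intro!: tendsto_eq_intros)
  from tendsto_add[OF this(1) err] tendsto_diff[OF this(2) err]
  have "eventually (\<lambda>N. (\<Prod>i\<in>UNIV. max 0 (b $ i - a $ i + 2 * r N)) + err N < vol + \<epsilon>) sequentially"
    "eventually (\<lambda>N. vol - \<epsilon> < (\<Prod>i\<in>UNIV. max 0 (b $ i - a $ i - 2 * r N)) - err N) sequentially"
    using small by (auto simp: \<kappa>_def intro: order_tendstoD)
  moreover note eventually_pair_counts_le[OF pc c M] eventually_gt_at_top[of "0::nat"]
  ultimately show ?thesis
  proof eventually_elim
    case (elim N)
    have \<rho>: "c / root CARD('d) N > 0"
      using c elim(4) by (simp add: real_root_gt_zero)
    have mass: "real (card {1..N}) * unit_ball_vol TYPE('d) * (c / root CARD('d) N) ^ CARD('d) = \<kappa>"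
      using elim(4) by (simp add: \<kappa>_def power_divide)
    have "(\<Prod>i\<in>UNIV. max 0 (b$i - a$i - 2 * r N)) - err N
        \<le> card {n\<in>{1..N}. \<forall>i. a$i \<le> torus_frac (x n) $ i \<and> torus_frac (x n) $ i < b$i} / card {1..N}
      \<and> card {n\<in>{1..N}. \<forall>i. a$i \<le> torus_frac (x n) $ i \<and> torus_frac (x n) $ i < b$i} / card {1..N}
        \<le> (\<Prod>i\<in>UNIV. max 0 (b$i - a$i + 2 * r N)) + err N"
      using proportion_in_box_bounds[where p = "\<lambda>n. torus_frac (x n)" and \<delta> = "\<lambda>m n. torus_dist (x m) (x n)"
          and I = "{1..N}" and r = "c / root CARD('d) N" and M = M and \<eta> = \<eta> and a = a and b = b,
          OF _ _ \<rho> M \<eta> torus_dist_nonneg torus_dist_le_dist_frac elim(3)[rule_format]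
          _ box[rule_format]]
        elim(4) torus_frac_bounds
      unfolding mass by (auto simp: err_def r_def)
    then show ?case
      using elim(1,2) by (simp add: vol_def abs_less_iff)
  qed
qed

theorem theorem1:
  fixes x :: "nat \<Rightarrow> real^'d"
  assumes "\<forall>s > 0. (\<lambda>N. real (card {(m, n). m \<in> {1..N} \<and> n \<in> {1..N} \<and> m \<noteq> n \<and>
               torus_dist (x m) (x n) \<le> s / root CARD('d) (real N)}) / real N)
             \<longlonglongrightarrow> unit_ball_vol TYPE('d) * s ^ CARD('d)"
  shows "torus_unif_distr x"
  unfolding torus_unif_distr_def
proof (intro allI impI)
  fix a b :: "real^'d"
  assume box: "\<forall>i. 0 \<le> a $ i \<and> a $ i \<le> b $ i \<and> b $ i \<le> 1"
  show "(\<lambda>N. real (card {n \<in> {1..N}. \<forall>i. a $ i \<le> torus_frac (x n) $ i \<and> torus_frac (x n) $ i < b $ i}) / real N)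
    \<longlonglongrightarrow> (\<Prod>i\<in>UNIV. b $ i - a $ i)"
  proof (rule tendstoI)
    fix \<epsilon> :: real
    assume "\<epsilon> > 0"
    obtain c \<eta> :: real and M :: nat where "c > 0" "M > 0" "\<eta> > 0"
      "(2 / (unit_ball_vol TYPE('d) * c ^ CARD('d)) + 2 ^ CARD('d) / M) / (2 * \<eta>) + \<eta> / 2 < \<epsilon>"
      by (rule error_parameters_exist[OF unit_ball_vol_pos zero_less_card_finite \<open>\<epsilon> > 0\<close>])
    from eventually_proportion_in_box_close[OF assms box this]
    show "eventually (\<lambda>N. dist (real (card {n \<in> {1..N}. \<forall>i. a $ i \<le> torus_frac (x n) $ i
        \<and> torus_frac (x n) $ i < b $ i}) / real N) (\<Prod>i\<in>UNIV. b $ i - a $ i) < \<epsilon>) sequentially"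
      by (simp add: dist_real_def)
  qed
qed

end
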